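(* Let $\mathbf A=(\mathbf a_1,\ldots,\mathbf a_m)^\top\in\mathbb R^{m\times d}$ and $\mathbf b=(b_1,\ldots,b_m)^\top\in\mathbb R^m$. Then the following are equivalent: (A) $(\mathbf A,\mathbf b)$ is affine phase retrievable for $\mathbb R^d$. (B) The map $\mathbf M^2_{\mathbf A,\mathbf b}$ is injective on $\mathbb R^d$. (C) For any $\mathbf u,\mathbf v\in\mathbb R^d$ with $\mathbf u\neq 0$, there exists $k$ with $1\le k\le m$ such that $\langle \mathbf a_k,\mathbf u\rangle(\langle \mathbf a_k,\mathbf v\rangle+b_k)\neq 0$. (D) For any $S\subset\{1,\ldots,m\}$, if $\mathbf b_S\in\mathrm{span}(\mathbf A_S)$ then $\mathrm{span}(\mathbf A_{S^c}^\top)=\mathrm{span}\{\mathbf a_j: j\in S^c\}=\mathbb R^d$. (E) The Jacobian $J(\mathbf x)$ of the map $\mathbf M^2_{\mathbf A,\mathbf b}$ has rank $d$ for all $\mathbf x\in\mathbb R^d$.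
   Context: For $\mathbf A=(\mathbf a_1,\ldots,\mathbf a_m)^\top$ and $\mathbf b$, define $\mathbf M_{\mathbf A,\mathbf b}(\mathbf x)=(|\langle\mathbf a_1,\mathbf x\rangle+b_1|,\ldots,|\langle\mathbf a_m,\mathbf x\rangle+b_m|)$ and $\mathbf M^2_{\mathbf A,\mathbf b}(\mathbf x)=(|\langle\mathbf a_1,\mathbf x\rangle+b_1|^2,\ldots,|\langle\mathbf a_m,\mathbf x\rangle+b_m|^2)$, where $\langle\cdot,\cdot\rangle$ is the standard inner product. $(\mathbf A,\mathbf b)$ is called affine phase retrievable for $\mathbb R^d$ if $\mathbf M_{\mathbf A,\mathbf b}$ is injective on $\mathbb R^d$. For $T\subset\{1,\ldots,m\}$, $\mathbf A_T=(\mathbf a_j:j\in T)^\top$ is the submatrix of rows indexed by $T$, $\mathbf b_T$ the subvector of entries indexed by $T$, $S^c$ the complement of $S$ in $\{1,\ldots,m\}$, and for a matrix $\mathbf B$, $\mathrm{span}(\mathbf B)$ is the span of its columns (so $\mathrm{span}(\mathbf A_T)\subset\mathbb R^{\#T}$). *)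

theory Defs
  imports "HOL-Analysis.Analysis"
begin

text \<open>Rows of A :: real^'d^'m are a_k = A $ k; m = CARD('m), d = CARD('d).\<close>

definition M_map :: "real^'d^'m \<Rightarrow> real^'m \<Rightarrow> real^'d \<Rightarrow> real^'m" where
  "M_map A b x = (\<chi> k. \<bar>inner (A $ k) x + b $ k\<bar>)"

definition M2_map :: "real^'d^'m \<Rightarrow> real^'m \<Rightarrow> real^'d \<Rightarrow> real^'m" where
  "M2_map A b x = (\<chi> k. \<bar>inner (A $ k) x + b $ k\<bar> ^ 2)"

definition affine_phase_retrievable :: "real^'d^'m \<Rightarrow> real^'m \<Rightarrow> bool" where
  "affine_phase_retrievable A b \<longleftrightarrow> inj (M_map A b)"

definition b_in_span_AS :: "real^'d^'m \<Rightarrow> real^'m \<Rightarrow> 'm set \<Rightarrow> bool" where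
  "b_in_span_AS A b S \<longleftrightarrow> (\<exists>x::real^'d. \<forall>j\<in>S. b $ j = inner (A $ j) x)"

end

theory Submission
  imports Defs
begin

text \<open>Every pair of points has the form v + u, v - u, and the points coincide iff u = 0.
  Since |p + q| = |p - q| iff p q = 0, M identifies v + u with v - u exactly when u is a
  degenerate direction at v: all products <a_k, u> (<a_k, v> + b_k) vanish. Up to a factor 2
  these products are the entries of J(v) u, so (C) and (E) say the same thing. A nonzero
  degenerate direction u at v amounts to the set S = {k. <a_k, v> + b_k = 0}, for which
  b_S = A_S (-v), together with the fact that u is orthogonal to every a_j with j outside S;
  this gives (D).\<close>

definition degenerate_direction :: "real^'d^'m \<Rightarrow> real^'m \<Rightarrow> real^'d \<Rightarrow> real^'d \<Rightarrow> bool" where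
  "degenerate_direction A b v u \<longleftrightarrow> (\<forall>k. inner (A $ k) u * (inner (A $ k) v + b $ k) = 0)"

lemma abs_add_eq_abs_diff_iff:
  fixes p q :: "'a::linordered_idom"
  shows "\<bar>p + q\<bar> = \<bar>p - q\<bar> \<longleftrightarrow> p * q = 0"
proof -
  have "\<bar>p + q\<bar> = \<bar>p - q\<bar> \<longleftrightarrow> (p + q)\<^sup>2 = (p - q)\<^sup>2"
    by (metis abs_ge_zero power2_abs power2_eq_iff_nonneg)
  also have "\<dots> \<longleftrightarrow> p * q = 0"
    by (simp add: power2_eq_square algebra_simps)
  finally show ?thesis .
qed

lemma M2_map_eq_iff: "M2_map A b x = M2_map A b y \<longleftrightarrow> M_map A b x = M_map A b y"
  by (simp add: M2_map_def M_map_def vec_eq_iff power2_eq_iff abs_eq_iff)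

lemma affine_phase_retrievable_iff_inj_M2_map:
  "affine_phase_retrievable A b \<longleftrightarrow> inj (M2_map A b)"
  by (simp add: affine_phase_retrievable_def inj_def M2_map_eq_iff)

lemma M_map_add_eq_diff_iff:
  "M_map A b (v + u) = M_map A b (v - u) \<longleftrightarrow> degenerate_direction A b v u"
proof -
  have "\<bar>inner (A $ k) (v + u) + b $ k\<bar> = \<bar>inner (A $ k) (v - u) + b $ k\<bar> \<longleftrightarrow>
        inner (A $ k) u * (inner (A $ k) v + b $ k) = 0" for k
    using abs_add_eq_abs_diff_iff[of "inner (A $ k) v + b $ k" "inner (A $ k) u"]
    by (simp add: inner_add_right inner_diff_right algebra_simps)
  then show ?thesis
    by (simp add: M_map_def vec_eq_iff degenerate_direction_def)
qed

lemma affine_phase_retrievable_iff_no_degenerate_direction: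
  "affine_phase_retrievable A b \<longleftrightarrow> (\<forall>v u. degenerate_direction A b v u \<longrightarrow> u = 0)"
proof
  assume inj: "affine_phase_retrievable A b"
  show "\<forall>v u. degenerate_direction A b v u \<longrightarrow> u = 0"
  proof (intro allI impI)
    fix v u assume "degenerate_direction A b v u"
    then have "v + u = v - u"
      using inj by (simp add: M_map_add_eq_diff_iff affine_phase_retrievable_def inj_def)
    then have "2 *\<^sub>R u = 0" by (simp add: algebra_simps scaleR_2)
    then show "u = 0" by simp
  qed
next
  assume nondeg: "\<forall>v u. degenerate_direction A b v u \<longrightarrow> u = 0"
  show "affine_phase_retrievable A b"
    unfolding affine_phase_retrievable_def
  proof (rule injI)
    fix x y assume eq: "M_map A b x = M_map A b y"
    define v u where "v = (1/2) *\<^sub>R (x + y)" and "u = (1/2) *\<^sub>R (x - y)"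
    have "x = v + u" "y = v - u"
      by (simp_all add: v_def u_def algebra_simps flip: scaleR_add_left)
    with eq have "M_map A b (v + u) = M_map A b (v - u)" by simp
    then have "u = 0"
      using nondeg by (simp add: M_map_add_eq_diff_iff)
    then show "x = y" by (simp add: u_def)
  qed
qed

lemma has_derivative_M2_map:
  fixes A :: "real^'d^'m" and b :: "real^'m"
  shows "(M2_map A b has_derivative (\<lambda>h. \<chi> k. 2 * (inner (A $ k) x + b $ k) * inner (A $ k) h)) (at x)"
proof (subst has_derivative_componentwise_within, intro ballI)
  fix i :: "real^'m" assume "i \<in> Basis"
  then obtain k where i: "i = axis k 1" by (auto simp: Basis_vec_def)
  have "((\<lambda>y. (inner (A $ k) y + b $ k)\<^sup>2) has_derivative
         (\<lambda>h. 2 * (inner (A $ k) x + b $ k) * inner (A $ k) h)) (at x)"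
    by (auto intro!: derivative_eq_intros simp: algebra_simps)
  then show "((\<lambda>y. M2_map A b y \<bullet> i) has_derivative
      (\<lambda>h. (\<chi> k. 2 * (inner (A $ k) x + b $ k) * inner (A $ k) h) \<bullet> i)) (at x)"
    by (simp add: i inner_axis M2_map_def)
qed

lemma jacobian_M2_map_mult:
  "jacobian (M2_map A b) (at x) *v h = (\<chi> k. 2 * (inner (A $ k) x + b $ k) * inner (A $ k) h)"
proof -
  have "(M2_map A b has_derivative (\<lambda>h. jacobian (M2_map A b) (at x) *v h)) (at x)"
    using differentiableI[OF has_derivative_M2_map] by (simp add: jacobian_works)
  from has_derivative_unique[OF this has_derivative_M2_map] show ?thesis by meson
qed

lemma jacobian_M2_map_mult_eq_0_iff:
  "jacobian (M2_map A b) (at v) *v u = 0 \<longleftrightarrow> degenerate_direction A b v u"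
  by (auto simp: jacobian_M2_map_mult vec_eq_iff degenerate_direction_def mult.commute)

lemma rank_jacobian_M2_map_eq_iff:
  fixes A :: "real^'d^'m"
  shows "rank (jacobian (M2_map A b) (at v)) = CARD('d) \<longleftrightarrow>
    (\<forall>u. degenerate_direction A b v u \<longrightarrow> u = 0)"
  using matrix_nonfull_linear_equations_eq[of "jacobian (M2_map A b) (at v)"]
  by (auto simp: jacobian_M2_map_mult_eq_0_iff)

lemma span_eq_UNIV_iff_only_zero_orthogonal:
  fixes T :: "'a::euclidean_space set"
  shows "span T = UNIV \<longleftrightarrow> (\<forall>u. (\<forall>t\<in>T. inner u t = 0) \<longrightarrow> u = 0)"
proof
  assume span: "span T = UNIV"
  show "\<forall>u. (\<forall>t\<in>T. inner u t = 0) \<longrightarrow> u = 0"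
  proof (intro allI impI)
    fix u assume "\<forall>t\<in>T. inner u t = 0"
    then have "span T \<subseteq> {y. inner u y = 0}"
      by (intro span_minimal) (auto simp: subspace_def inner_add_right)
    then show "u = 0" using span by (auto intro: inner_eq_zero_iff[THEN iffD1])
  qed
next
  assume only_zero: "\<forall>u. (\<forall>t\<in>T. inner u t = 0) \<longrightarrow> u = 0"
  show "span T = UNIV"
  proof (rule ccontr)
    assume "span T \<noteq> UNIV"
    then have "dim T < DIM('a)"
      by (metis dim_eq_full dim_subset_UNIV le_neq_implies_less)
    from orthogonal_to_subspace_exists[OF this] obtain u
      where "u \<noteq> 0" "\<And>y. y \<in> span T \<Longrightarrow> orthogonal u y" by blast
    with only_zero show False by (auto simp: orthogonal_def span_base)
  qed
qed

lemma no_degenerate_direction_iff_span_complement: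
  "(\<forall>v u. degenerate_direction A b v u \<longrightarrow> u = 0) \<longleftrightarrow>
   (\<forall>S. b_in_span_AS A b S \<longrightarrow> span {A $ j | j. j \<in> - S} = UNIV)"
proof
  assume nondeg: "\<forall>v u. degenerate_direction A b v u \<longrightarrow> u = 0"
  show "\<forall>S. b_in_span_AS A b S \<longrightarrow> span {A $ j | j. j \<in> - S} = UNIV"
  proof (intro allI impI)
    fix S assume "b_in_span_AS A b S"
    then obtain x where x: "\<forall>j\<in>S. b $ j = inner (A $ j) x"
      unfolding b_in_span_AS_def by blast
    have "u = 0" if "\<forall>j\<in>-S. inner u (A $ j) = 0" for u
    proof -
      have "degenerate_direction A b (-x) u"
        using x that by (auto simp: degenerate_direction_def inner_commute)
      then show ?thesis using nondeg by blast
    qed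
    then show "span {A $ j | j. j \<in> - S} = UNIV"
      by (auto simp: span_eq_UNIV_iff_only_zero_orthogonal)
  qed
next
  assume span: "\<forall>S. b_in_span_AS A b S \<longrightarrow> span {A $ j | j. j \<in> - S} = UNIV"
  show "\<forall>v u. degenerate_direction A b v u \<longrightarrow> u = 0"
  proof (intro allI impI)
    fix v u assume deg: "degenerate_direction A b v u"
    define S where "S = {k. inner (A $ k) v + b $ k = 0}"
    have "b_in_span_AS A b S"
      unfolding b_in_span_AS_def by (rule exI[of _ "-v"]) (auto simp: S_def)
    with span have "span {A $ j | j. j \<in> - S} = UNIV" by blast
    moreover have "\<forall>j\<in>-S. inner u (A $ j) = 0"
      using deg by (auto simp: S_def degenerate_direction_def inner_commute)
    ultimately show "u = 0"
      by (auto simp: span_eq_UNIV_iff_only_zero_orthogonal)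
  qed
qed

theorem theorem2p1:
  fixes A :: "real^'d^'m" and b :: "real^'m"
  shows "(affine_phase_retrievable A b \<longleftrightarrow> inj (M2_map A b))
       \<and> (affine_phase_retrievable A b \<longleftrightarrow>
            (\<forall>u v :: real^'d. u \<noteq> 0 \<longrightarrow>
               (\<exists>k. inner (A $ k) u * (inner (A $ k) v + b $ k) \<noteq> 0)))
       \<and> (affine_phase_retrievable A b \<longleftrightarrow>
            (\<forall>S :: 'm set. b_in_span_AS A b S \<longrightarrow> span {A $ j | j. j \<in> - S} = UNIV))
       \<and> (affine_phase_retrievable A b \<longleftrightarrow>
            (\<forall>x :: real^'d. rank (jacobian (M2_map A b) (at x)) = CARD('d)))"
proof -
  have C: "(\<forall>u v :: real^'d. u \<noteq> 0 \<longrightarrow>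
              (\<exists>k. inner (A $ k) u * (inner (A $ k) v + b $ k) \<noteq> 0))
        \<longleftrightarrow> (\<forall>v u. degenerate_direction A b v u \<longrightarrow> u = 0)"
    by (auto simp: degenerate_direction_def)
  show ?thesis
    unfolding C rank_jacobian_M2_map_eq_iff
    by (simp add: affine_phase_retrievable_iff_inj_M2_map [symmetric]
        affine_phase_retrievable_iff_no_degenerate_direction
        no_degenerate_direction_iff_span_complement)
qed

end
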